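(* There exists a constant $M$ such that for every $n \ge 1$ and every non-zero polynomial $f(z) = \sum_{i=0}^n a_i z^i$ with $a_i \in \{-1,0,1\}$ for all $0\le i\le n$, the number of $z\in\mathbb{C}$ with $f(z) = 0$ and $|z|\ge\frac{3}{2}$ is at most $M$. *)

theory Defs
  imports "HOL-Analysis.Analysis"
begin

end

theory Submission
  imports Defs "HOL-Complex_Analysis.Complex_Analysis"
begin

text \<open>
  Reflecting the polynomial turns its roots of modulus at least \<open>3/2\<close> into roots of modulus at
  most \<open>2/3\<close> of a polynomial whose coefficients have modulus at most 1 and whose constant term has
  modulus 1. For such a polynomial \<open>g\<close> with \<open>k\<close> roots in the disc of radius \<open>r\<close>, write
  \<open>g = (\<Prod>(z - u)) h\<close>. Replacing each factor \<open>z - u\<close> by \<open>(R\<^sup>2 - cnj u \<cdot> z) / R\<close> does not change the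
  modulus on the circle \<open>|z| = R\<close>, where \<open>|g| \<le> 1/(1 - R)\<close>; by the maximum modulus principle at
  \<open>z = 0\<close> this gives \<open>|h(0)| R\<^sup>k \<le> 1/(1 - R)\<close>, while \<open>1 \<le> |g(0)| \<le> |h(0)| r\<^sup>k\<close>. Hence
  \<open>(R/r)\<^sup>k \<le> 1/(1 - R)\<close>, and \<open>r = 2/3\<close>, \<open>R = 5/6\<close> yields \<open>k \<le> 8\<close>.
\<close>

lemma prod_linear_factors_dvd:
  fixes g :: "'a::idom poly"
  assumes "finite W" "\<And>u. u \<in> W \<Longrightarrow> poly g u = 0"
  shows "(\<Prod>u\<in>W. [:-u, 1:]) dvd g"
  using assms
proof (induction W arbitrary: g rule: finite_induct)
  case empty
  then show ?case by simp
next
  case (insert u W)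
  then obtain g1 where g1: "g = [:-u, 1:] * g1"
    using poly_eq_0_iff_dvd by (metis dvdE insertI1)
  have "poly g1 v = 0" if "v \<in> W" for v
    using insert.hyps insert.prems[of v] that g1 by auto
  then have "(\<Prod>u\<in>W. [:-u, 1:]) dvd g1"
    using insert.IH by blast
  then show ?case
    using insert.hyps g1 by (simp add: mult_dvd_mono del: mult_pCons_left)
qed

lemma norm_poly_le_geometric:
  fixes g :: "complex poly"
  assumes "\<And>i. norm (coeff g i) \<le> 1" "norm w \<le> R" "R < 1"
  shows "norm (poly g w) \<le> 1 / (1 - R)"
proof -
  have R: "0 \<le> R"
    using assms(2) norm_ge_zero order_trans by blast
  have "norm (poly g w) = norm (\<Sum>i\<le>degree g. coeff g i * w ^ i)"
    by (simp add: poly_altdef)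
  also have "\<dots> \<le> (\<Sum>i\<le>degree g. R ^ i)"
  proof (rule sum_norm_le)
    fix i
    have "norm (coeff g i) * norm w ^ i \<le> 1 * R ^ i"
      using assms R by (intro mult_mono power_mono) auto
    then show "norm (coeff g i * w ^ i) \<le> R ^ i"
      by (simp add: norm_mult norm_power)
  qed
  also have "\<dots> \<le> (\<Sum>i. R ^ i)"
    using R assms(3) by (intro sum_le_suminf) (auto intro: summable_geometric)
  also have "\<dots> = 1 / (1 - R)"
    using R assms(3) by (simp add: suminf_geometric)
  finally show ?thesis .
qed

lemma norm_blaschke_factor_on_circle:
  fixes u w :: complex
  assumes "norm w = R" "R > 0"
  shows "norm ((of_real (R\<^sup>2) - cnj u * w) / of_real R) = norm (w - u)"
proof -
  have "of_real (R\<^sup>2) - cnj u * w = w * cnj (w - u)"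
    using assms(1) complex_norm_square[of w] by (simp add: algebra_simps)
  then have "norm (of_real (R\<^sup>2) - cnj u * w) = R * norm (w - u)"
    using assms(1) by (simp only: norm_mult complex_mod_cnj)
  then show ?thesis
    using assms(2) by (simp add: norm_divide)
qed

lemma norm_cofactor_at_0_le:
  fixes g h :: "complex poly"
  assumes g: "g = (\<Prod>u\<in>W. [:-u, 1:]) * h" and "finite W" "R > 0"
    and bound: "\<And>w. norm w = R \<Longrightarrow> norm (poly g w) \<le> B"
  shows "norm (poly h 0) * R ^ card W \<le> B"
proof -
  define F where "F w = poly h w * (\<Prod>u\<in>W. (of_real (R\<^sup>2) - cnj u * w) / of_real R)" for w
  have F_circle: "norm (F w) = norm (poly g w)" if "norm w = R" for w
  proof -
    have "norm (F w) = norm (poly h w) * (\<Prod>u\<in>W. norm ((of_real (R\<^sup>2) - cnj u * w) / of_real R))"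
      by (simp add: F_def norm_mult flip: prod_norm)
    also have "\<dots> = norm (poly h w) * (\<Prod>u\<in>W. norm (w - u))"
      using norm_blaschke_factor_on_circle[OF that \<open>R > 0\<close>] by simp
    also have "\<dots> = norm (poly g w)"
      by (simp add: g poly_prod norm_mult flip: prod_norm)
    finally show ?thesis .
  qed
  have holo: "F holomorphic_on UNIV"
    unfolding F_def poly_altdef using \<open>R > 0\<close> by (intro holomorphic_intros) auto
  have "norm (F 0) \<le> B"
  proof (rule maximum_modulus_frontier[where S = "cball 0 R" and f = F])
    show "F holomorphic_on interior (cball 0 R)"
      using holo by (rule holomorphic_on_subset) auto
    show "continuous_on (closure (cball 0 R)) F"
      by (rule holomorphic_on_imp_continuous_on, rule holomorphic_on_subset[OF holo]) auto
    show "norm (F z) \<le> B" if "z \<in> frontier (cball 0 R)" for z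
      using that \<open>R > 0\<close> F_circle bound by simp
  qed (use \<open>R > 0\<close> in auto)
  moreover have "F 0 = poly h 0 * of_real R ^ card W"
    using \<open>R > 0\<close> by (simp add: F_def power2_eq_square)
  ultimately show ?thesis
    using \<open>R > 0\<close> by (simp add: norm_mult norm_power)
qed

lemma card_roots_in_cball_bound:
  fixes g :: "complex poly"
  assumes coeff_le: "\<And>i. norm (coeff g i) \<le> 1" and coeff_0: "norm (coeff g 0) \<ge> 1"
    and "0 < r" "r < R" "R < 1"
    and W: "finite W" "\<And>w. w \<in> W \<Longrightarrow> poly g w = 0 \<and> norm w \<le> r"
  shows "(R / r) ^ card W \<le> 1 / (1 - R)"
proof -
  obtain h where g: "g = (\<Prod>u\<in>W. [:-u, 1:]) * h"
    using prod_linear_factors_dvd[of W g] W by (auto elim: dvdE)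
  have "norm (poly g w) \<le> 1 / (1 - R)" if "norm w = R" for w
    using norm_poly_le_geometric[OF coeff_le] that \<open>R < 1\<close> by simp
  then have upper: "norm (poly h 0) * R ^ card W \<le> 1 / (1 - R)"
    using g W(1) \<open>0 < r\<close> \<open>r < R\<close> by (intro norm_cofactor_at_0_le) auto
  have "1 \<le> norm (poly g 0)"
    using coeff_0 by (simp add: poly_0_coeff_0)
  also have "\<dots> = norm (poly h 0) * (\<Prod>u\<in>W. norm u)"
    by (simp add: g poly_prod norm_mult prod_norm[symmetric])
  also have "\<dots> \<le> norm (poly h 0) * r ^ card W"
    using W prod_mono[of W norm "\<lambda>_. r"] by (intro mult_left_mono) auto
  finally have lower: "1 \<le> norm (poly h 0) * r ^ card W" .
  have "(R / r) ^ card W \<le> (R / r) ^ card W * (norm (poly h 0) * r ^ card W)"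
    using lower \<open>0 < r\<close> \<open>r < R\<close> by simp
  also have "\<dots> = norm (poly h 0) * R ^ card W"
    using \<open>0 < r\<close> by (simp add: power_divide)
  finally show ?thesis
    using upper by linarith
qed

lemma card_roots_outside_le_reflect:
  fixes p :: "complex poly"
  assumes "p \<noteq> 0" "\<rho> > 0"
  shows "card {z. poly p z = 0 \<and> norm z \<ge> \<rho>}
           \<le> card {w. poly (reflect_poly p) w = 0 \<and> norm w \<le> 1 / \<rho>}"
    (is "card ?Z \<le> card ?W")
proof -
  have fin: "finite ?W"
    using poly_roots_finite[of "reflect_poly p"] assms(1) by simp
  have "?Z \<subseteq> inverse ` ?W"
  proof
    fix z assume z: "z \<in> ?Z"
    then have "z \<noteq> 0"
      using assms(2) by auto
    then have "poly (reflect_poly p) (inverse z) = 0"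
      using z by (simp add: poly_reflect_poly_nz)
    moreover have "norm (inverse z) \<le> 1 / \<rho>"
      using z assms(2) by (simp add: norm_inverse divide_inverse le_imp_inverse_le)
    ultimately have "inverse z \<in> ?W"
      by simp
    then show "z \<in> inverse ` ?W"
      by (metis image_eqI inverse_inverse_eq)
  qed
  then have "card ?Z \<le> card (inverse ` ?W)"
    using fin by (intro card_mono) auto
  also have "\<dots> \<le> card ?W"
    using fin by (rule card_image_le)
  finally show ?thesis .
qed

lemma card_roots_norm_ge_3_2_le_8:
  fixes p :: "complex poly"
  assumes "p \<noteq> 0" "\<And>i. norm (coeff p i) \<le> 1" "norm (lead_coeff p) \<ge> 1"
  shows "card {z. poly p z = 0 \<and> norm z \<ge> 3/2} \<le> 8"
proof -
  define g where "g = reflect_poly p"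
  define W where "W = {w. poly g w = 0 \<and> norm w \<le> 2/3}"
  have "finite W"
    using poly_roots_finite[of g] assms(1) by (simp add: W_def g_def)
  then have "((5/6) / (2/3)) ^ card W \<le> 1 / (1 - 5/6 :: real)"
    using assms by (intro card_roots_in_cball_bound[of g])
      (auto simp: W_def g_def coeff_reflect_poly)
  also have "\<dots> < (5/4) ^ 9"
    by (simp add: power_numeral_reduce)
  finally have "(5/4 :: real) ^ card W < (5/4) ^ 9"
    by simp
  then have "card W < 9"
    by (subst (asm) power_strict_increasing_iff) auto
  moreover have "card {z. poly p z = 0 \<and> norm z \<ge> 3/2} \<le> card W"
    using card_roots_outside_le_reflect[OF assms(1), of "3/2"] by (simp add: W_def g_def)
  ultimately show ?thesis
    by linarith
qed

theorem claim2p1: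
  shows "\<exists>M::nat. \<forall>(n::nat) (a::nat \<Rightarrow> int).
           n \<ge> 1 \<longrightarrow> (\<forall>i\<le>n. a i \<in> {-1, 0, 1}) \<longrightarrow> (\<exists>i\<le>n. a i \<noteq> 0) \<longrightarrow>
           card {z::complex. (\<Sum>i=0..n. of_int (a i) * z ^ i) = 0 \<and> norm z \<ge> 3/2} \<le> M"
proof (intro exI[of _ 8] allI impI)
  fix n :: nat and a :: "nat \<Rightarrow> int"
  assume a: "\<forall>i\<le>n. a i \<in> {-1, 0, 1}" and nz: "\<exists>i\<le>n. a i \<noteq> 0"
  define p :: "complex poly" where "p = (\<Sum>i=0..n. monom (of_int (a i)) i)"
  have coeff_p: "coeff p i = (if i \<le> n then of_int (a i) else 0)" for i
    by (simp add: p_def coeff_sum coeff_monom)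
  have "p \<noteq> 0"
    using nz coeff_p by (metis coeff_0 of_int_eq_0_iff)
  moreover have "norm (coeff p i) \<le> 1" for i
    using a[rule_format, of i] by (auto simp: coeff_p)
  moreover have "norm (lead_coeff p) = 1"
    using a[rule_format, of "degree p"] leading_coeff_neq_0[OF \<open>p \<noteq> 0\<close>]
    by (auto simp: coeff_p split: if_splits)
  ultimately have "card {z. poly p z = 0 \<and> norm z \<ge> 3/2} \<le> 8"
    by (intro card_roots_norm_ge_3_2_le_8) auto
  then show "card {z::complex. (\<Sum>i=0..n. of_int (a i) * z ^ i) = 0 \<and> norm z \<ge> 3/2} \<le> 8"
    by (simp add: p_def poly_sum poly_monom)
qed

end
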